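(* (i) If $(b_0,\dots,b_{m+1})\in X_m(\mathbb C)$ (indices of $b$ taken modulo $m+2$), then $T_i(k):=P_i(b_{\frac{k-i}{2}},\dots,b_{\frac{k+i-2}{2}})$ defines a solution of the $T$-system of level $m$, and for generic $(b_j)$ this solution is nonvanishing. (ii) Every nonvanishing solution of the $T$-system of level $m$ is of this form for a unique $(b_0,\dots,b_{m+1})\in X_m(\mathbb C)$.
   Context: Let $m\ge1$, $J=\begin{pmatrix} i&0\\1&i\end{pmatrix}$, $B(b)=\begin{pmatrix}1&b\\0&-1\end{pmatrix}$. $X_m\subset\mathbb A^{m+2}$ (coordinates $b_0,\dots,b_{m+1}$) is cut out by $B(b_0)JB(b_1)J\cdots B(b_{m+1})J=-1$. The polynomials $P_r$ are defined by $P_0=1$, $P_1(b_1)=b_1$, $P_r(b_1,\dots,b_r)=P_{r-1}(b_1,\dots,b_{r-1})b_r-P_{r-2}(b_1,\dots,b_{r-2})$; $P_i(a_1,\dots,a_i)$ denotes $P_i$ evaluated at the listed $i$ arguments. A solution of the $T$-system of level $m$ is a collection of complex numbers $T_i(k)$, $0\le i\le m$, $k\in\mathbb Z$, $i+k$ even, with $T_0(k)=T_m(k)=1$ for all $k$ and $T_i(k-1)T_i(k+1)=T_{i-1}(k)T_{i+1}(k)+1$ for $1\le i\le m-1$; it is nonvanishing if all $T_i(k)\neq0$. *)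

theory Defs
  imports "HOL-Analysis.Analysis"
begin

definition Jmat :: "complex^2^2" where
  "Jmat = vector [vector [\<i>, 0], vector [1, \<i>]]"

definition Bmat :: "complex \<Rightarrow> complex^2^2" where
  "Bmat b = vector [vector [1, b], vector [0, -1]]"

text \<open>Points of X_m: b_0..b_{m+1} stored as b 0, ..., b (m+1); b j = 0 for j > m+1
  (padding, so that points correspond exactly to C^(m+2)).
  Condition: B(b_0) J B(b_1) J ... B(b_{m+1}) J = -1.\<close>
definition Xm :: "nat \<Rightarrow> (nat \<Rightarrow> complex) set" where
  "Xm m = {b. (\<forall>j\<ge>m+2. b j = 0) \<and>
     foldr (\<lambda>j M. (Bmat (b j) ** Jmat) ** M) [0..<m+2] (mat 1) = - mat 1}"

fun P :: "nat \<Rightarrow> (nat \<Rightarrow> complex) \<Rightarrow> complex" where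
  "P 0 a = 1"
| "P (Suc 0) a = a 1"
| "P (Suc (Suc r)) a = P (Suc r) a * a (Suc (Suc r)) - P r a"

definition Tb :: "nat \<Rightarrow> (nat \<Rightarrow> complex) \<Rightarrow> nat \<Rightarrow> int \<Rightarrow> complex" where
  "Tb m b i k = P i (\<lambda>j. b (nat (((k - int i) div 2 + int j - 1) mod int (m + 2))))"

text \<open>Solution of the T-system of level m; only values with i \<le> m, i+k even matter.\<close>
definition T_solution :: "nat \<Rightarrow> (nat \<Rightarrow> int \<Rightarrow> complex) \<Rightarrow> bool" where
  "T_solution m T \<longleftrightarrow>
     (\<forall>k. even k \<longrightarrow> T 0 k = 1) \<and>
     (\<forall>k. even (int m + k) \<longrightarrow> T m k = 1) \<and>
     (\<forall>i k. 1 \<le> i \<and> i + 1 \<le> m \<and> odd (int i + k) \<longrightarrow>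
        T i (k - 1) * T i (k + 1) = T (i - 1) k * T (i + 1) k + 1)"

definition T_nonvanishing :: "nat \<Rightarrow> (nat \<Rightarrow> int \<Rightarrow> complex) \<Rightarrow> bool" where
  "T_nonvanishing m T \<longleftrightarrow> (\<forall>i k. i \<le> m \<and> even (int i + k) \<longrightarrow> T i k \<noteq> 0)"

end

(*
  Conjugation by [[1, -i], [0, 1]] turns B(b) J into N(b) = [[b, 1], [-1, 0]], and the product
  N(c_s) ... N(c_(s+r+1)) has the continuants P_(r+2), P_(r+1) of (c_s, c_(s+1), ...) and
  -P_(r+1), -P_r of (c_(s+1), ...) as entries. Its determinant being 1 is the T-system relation
  for T_i(k) = P_i(c_((k-i)/2), ...), and the equation of X_m, monodromy -1 over one period,
  gives T_m = 1. Conversely, a nonvanishing solution is determined by its row T_1 through the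
  relation; T_m = 1 and T_(m-1) nonzero force T_(m+1) = 0 and T_(m+2) = -1, so the monodromy
  over every window of length m+2 is -1, which makes the row (m+2)-periodic.

  Genericity: where b_m is nonzero, b_0, ..., b_(m-2) are free coordinates on X_m. On the
  complex line joining such a point to the point with all b_j = 2 cos (pi/(m+2)), at which
  T_i(k) = sin ((i+1) pi/(m+2)) / sin (pi/(m+2)) is nonzero, the product of all T_i(k) over a
  period is holomorphic and not identically zero, so its zeros do not accumulate. A cyclic
  shift of the indices reaches every point with some b_j nonzero, and the zero point, when it
  lies in X_m, is the limit of the points (0, t, 0, -t, 0, ..., 0).
*)

theory Submission
  imports Defs "HOL-Complex_Analysis.Complex_Singularities"
begin

section \<open>Two-by-two matrices\<close>

definition mat2 :: "'a::zero \<Rightarrow> 'a \<Rightarrow> 'a \<Rightarrow> 'a \<Rightarrow> 'a^2^2" where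
  "mat2 a b c d = vector [vector [a, b], vector [c, d]]"

lemma mat2_nth [simp]:
  "mat2 a b c d $ 1 $ 1 = a" "mat2 a b c d $ 1 $ 2 = b"
  "mat2 a b c d $ 2 $ 1 = c" "mat2 a b c d $ 2 $ 2 = d"
  by (simp_all add: mat2_def)

lemma mat2_eq_iff: "mat2 a b c d = mat2 a' b' c' d' \<longleftrightarrow> a = a' \<and> b = b' \<and> c = c' \<and> d = d'"
  by (metis mat2_nth)

lemma mat2_cases: obtains a b c d where "A = mat2 a b c d"
proof
  show "A = mat2 (A$1$1) (A$1$2) (A$2$1) (A$2$2)"
    by (simp add: vec_eq_iff forall_2)
qed

lemma mat2_mult:
  fixes a :: "'a::semiring_1"
  shows "mat2 a b c d ** mat2 a' b' c' d' =
    mat2 (a*a' + b*c') (a*b' + b*d') (c*a' + d*c') (c*b' + d*d')"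
  by (simp add: vec_eq_iff forall_2 matrix_matrix_mult_def sum_2)

lemma mat_1_eq_mat2: "mat 1 = mat2 1 0 0 1"
  by (simp add: vec_eq_iff forall_2 mat_def)

lemma uminus_mat2: "- mat2 a b c d = mat2 (- a) (- b) (- c) (- d)"
  by (simp add: vec_eq_iff forall_2)

lemma det_mat2: "det (mat2 a b c d) = a * d - b * c"
  by (simp add: det_2)

lemma matrix_mul_uminus_left:
  fixes A :: "'a::ring_1^'n^'m"
  shows "(- A) ** B = - (A ** B)"
  by (simp add: vec_eq_iff matrix_matrix_mult_def sum_negf)

lemma matrix_mul_uminus_right:
  fixes A :: "'a::ring_1^'n^'m"
  shows "A ** (- B) = - (A ** B)"
  by (simp add: vec_eq_iff matrix_matrix_mult_def sum_negf)

lemma conj_eq_neg_one_iff: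
  fixes A :: "'a::ring_1^'n^'n"
  assumes inv: "A' ** A = mat 1" "A ** A' = mat 1" and conj: "A ** X = Y ** A"
  shows "X = - mat 1 \<longleftrightarrow> Y = - mat 1"
proof
  assume "Y = - mat 1"
  have "X = (A' ** A) ** X" by (simp add: inv)
  also have "\<dots> = A' ** (Y ** A)" by (simp add: matrix_mul_assoc[symmetric] conj)
  finally show "X = - mat 1"
    by (simp add: \<open>Y = - mat 1\<close> matrix_mul_uminus_left matrix_mul_uminus_right inv)
next
  assume "X = - mat 1"
  have "Y = Y ** (A ** A')" by (simp add: inv)
  also have "\<dots> = (A ** X) ** A'" by (simp add: matrix_mul_assoc conj)
  finally show "Y = - mat 1"
    by (simp add: \<open>X = - mat 1\<close> matrix_mul_uminus_left matrix_mul_uminus_right inv)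
qed

lemma mult_eq_neg_one_iff_adjugate:
  fixes a :: "'a::comm_ring_1"
  assumes "a * d - b * c = 1"
  shows "mat2 a b c d ** Q = - mat 1 \<longleftrightarrow> Q = mat2 (- d) b c (- a)"
proof
  let ?A = "mat2 a b c d" and ?B = "mat2 (- d) b c (- a)"
  have AB: "?A ** ?B = - mat 1" and BA: "?B ** ?A = - mat 1"
    using assms by (simp_all add: mat2_mult mat_1_eq_mat2 uminus_mat2 mat2_eq_iff algebra_simps)
  show "Q = ?B \<Longrightarrow> ?A ** Q = - mat 1" by (simp add: AB)
  assume "?A ** Q = - mat 1"
  then have "?B ** (?A ** Q) = - ?B" by (simp add: matrix_mul_uminus_right)
  then show "Q = ?B" by (simp add: matrix_mul_assoc BA matrix_mul_uminus_left)
qed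

section \<open>Continuant matrices\<close>

definition Nmat :: "complex \<Rightarrow> complex^2^2" where
  "Nmat b = mat2 b 1 (- 1) 0"

definition Nmat_inv :: "complex \<Rightarrow> complex^2^2" where
  "Nmat_inv b = mat2 0 (- 1) 1 b"

lemma Nmat_inv: "Nmat_inv b ** Nmat b = mat 1" "Nmat b ** Nmat_inv b = mat 1"
  by (simp_all add: Nmat_inv_def Nmat_def mat2_mult mat_1_eq_mat2)

definition Smat :: "complex^2^2" where
  "Smat = mat2 1 (- \<i>) 0 1"

definition Smat_inv :: "complex^2^2" where
  "Smat_inv = mat2 1 \<i> 0 1"

lemma Smat_inv: "Smat_inv ** Smat = mat 1" "Smat ** Smat_inv = mat 1"
  by (simp_all add: Smat_def Smat_inv_def mat2_mult mat_1_eq_mat2)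

lemma Bmat_Jmat_conj: "Bmat b ** Jmat = Smat ** Nmat b ** Smat_inv"
  by (simp add: Bmat_def Jmat_def Smat_def Smat_inv_def Nmat_def mat2_def[symmetric]
      mat2_mult mat2_eq_iff algebra_simps)

fun Nprod :: "(int \<Rightarrow> complex) \<Rightarrow> int \<Rightarrow> nat \<Rightarrow> complex^2^2" where
  "Nprod c s 0 = mat 1"
| "Nprod c s (Suc r) = Nprod c s r ** Nmat (c (s + int r))"

definition window :: "(int \<Rightarrow> complex) \<Rightarrow> int \<Rightarrow> nat \<Rightarrow> complex" where
  "window c s j = c (s + int j - 1)"

lemma Nprod_eq_continuants:
  "Nprod c s (Suc (Suc r)) =
     mat2 (P (r + 2) (window c s)) (P (r + 1) (window c s))
          (- P (r + 1) (window c (s + 1))) (- P r (window c (s + 1)))"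
proof (induction r)
  case 0
  show ?case
    by (simp add: mat_1_eq_mat2 Nmat_def mat2_mult window_def numeral_2_eq_2 mat2_eq_iff add.commute)
next
  case (Suc r)
  have "window c s (r + 3) = c (s + int (Suc (Suc r)))"
    and "window c (s + 1) (r + 2) = c (s + int (Suc (Suc r)))"
    by (simp_all add: window_def algebra_simps)
  moreover have "Nprod c s (Suc (Suc (Suc r)))
      = Nprod c s (Suc (Suc r)) ** Nmat (c (s + int (Suc (Suc r))))"
    by (rule Nprod.simps(2))
  ultimately show ?case
    unfolding Suc.IH Nmat_def mat2_mult mat2_eq_iff
    by (simp add: numeral_3_eq_3 numeral_2_eq_2 algebra_simps)
qed

lemma Nprod_add: "Nprod c s (a + r) = Nprod c s a ** Nprod c (s + int a) r"
  by (induction r) (simp_all add: matrix_mul_assoc algebra_simps)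

lemma Nprod_Suc_left: "Nprod c s (Suc r) = Nmat (c s) ** Nprod c (s + 1) r"
  using Nprod_add[of c s 1 r] by simp

lemma Nprod_cong:
  "(\<And>j. j < r \<Longrightarrow> c (s + int j) = c' (s + int j)) \<Longrightarrow> Nprod c s r = Nprod c' s r"
  by (induction r) auto

lemma Nprod_shift: "Nprod (\<lambda>x. c (x + q)) s r = Nprod c (s + q) r"
  by (induction r) (simp_all add: algebra_simps)

lemma det_Nprod: "det (Nprod c s r) = 1"
  by (induction r) (simp_all add: det_mul Nmat_def det_mat2)

lemma continuant_identity:
  "P (r + 1) (window c s) * P (r + 1) (window c (s + 1))
     - P (r + 2) (window c s) * P r (window c (s + 1)) = 1"
  using det_Nprod[of c s "Suc (Suc r)", unfolded Nprod_eq_continuants det_mat2]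
  by (simp add: algebra_simps)

section \<open>The monodromy condition\<close>

definition periodic_ext :: "nat \<Rightarrow> (nat \<Rightarrow> complex) \<Rightarrow> int \<Rightarrow> complex" where
  "periodic_ext n b x = b (nat (x mod int n))"

lemma periodic_ext_add_period: "periodic_ext n b (x + int n) = periodic_ext n b x"
  by (simp add: periodic_ext_def)

lemma periodic_ext_nth: "j < n \<Longrightarrow> periodic_ext n b (int j) = b j"
  by (simp add: periodic_ext_def)

lemma foldr_matrix_mul:
  "foldr (\<lambda>j M. A j ** M) xs X = foldr (\<lambda>j M. A j ** M) xs (mat 1) ** X"
  by (induction xs) (simp_all add: matrix_mul_assoc)

lemma foldr_Bmat_Jmat:
  "foldr (\<lambda>j M. (Bmat (b j) ** Jmat) ** M) [0..<r] (mat 1)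
     = Smat ** Nprod (\<lambda>x. b (nat x)) 0 r ** Smat_inv"
proof (induction r)
  case 0
  then show ?case by (simp add: Smat_inv)
next
  case (Suc r)
  have "foldr (\<lambda>j M. (Bmat (b j) ** Jmat) ** M) [0..<Suc r] (mat 1)
      = foldr (\<lambda>j M. (Bmat (b j) ** Jmat) ** M) [0..<r] (mat 1) ** (Bmat (b r) ** Jmat)"
    by (simp add: foldr_matrix_mul[of _ _ "Bmat (b r) ** Jmat"])
  also have "\<dots> = (Smat ** Nprod (\<lambda>x. b (nat x)) 0 r ** Smat_inv) ** (Smat ** Nmat (b r) ** Smat_inv)"
    by (simp only: Suc.IH) (simp only: Bmat_Jmat_conj)
  also have "\<dots> = Smat ** (Nprod (\<lambda>x. b (nat x)) 0 r ** (Smat_inv ** Smat) ** Nmat (b r)) ** Smat_inv"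
    by (simp add: matrix_mul_assoc)
  finally show ?case by (simp add: Smat_inv)
qed

lemma Xm_iff_Nprod:
  "b \<in> Xm m \<longleftrightarrow> (\<forall>j\<ge>m + 2. b j = 0) \<and> Nprod (periodic_ext (m + 2) b) 0 (m + 2) = - mat 1"
proof -
  let ?Q = "Nprod (\<lambda>x. b (nat x)) 0 (m + 2)"
  have "?Q = Nprod (periodic_ext (m + 2) b) 0 (m + 2)"
    by (rule Nprod_cong) (simp add: periodic_ext_def)
  moreover have "Smat ** ?Q ** Smat_inv = - mat 1 \<longleftrightarrow> ?Q = - mat 1"
    by (rule conj_eq_neg_one_iff[OF Smat_inv, symmetric]) (simp add: matrix_mul_assoc[symmetric] Smat_inv)
  ultimately show ?thesis
    unfolding Xm_def foldr_Bmat_Jmat by auto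
qed

lemma Nprod_neg_one_shift_iff:
  assumes "c (s + int n) = c s"
  shows "Nprod c (s + 1) n = - mat 1 \<longleftrightarrow> Nprod c s n = - mat 1"
proof (rule conj_eq_neg_one_iff[OF Nmat_inv])
  have "Nmat (c s) ** Nprod c (s + 1) n = Nprod c s (Suc n)"
    by (rule Nprod_Suc_left[symmetric])
  also have "\<dots> = Nprod c s n ** Nmat (c s)"
    using assms by (simp add: add.commute)
  finally show "Nmat (c s) ** Nprod c (s + 1) n = Nprod c s n ** Nmat (c s)" .
qed

lemma Nprod_neg_one_all_shifts:
  assumes per: "\<And>x. c (x + int n) = c x" and "Nprod c 0 n = - mat 1"
  shows "Nprod c s n = - mat 1"
proof (induction s rule: int_induct[where k = 0])
  case base
  show ?case by fact
next
  case (step1 i)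
  then show ?case using Nprod_neg_one_shift_iff[of c i n] per[of i] by simp
next
  case (step2 i)
  then show ?case using Nprod_neg_one_shift_iff[of c "i - 1" n] per[of "i - 1"] by simp
qed

lemma Xm_Nprod:
  assumes "b \<in> Xm m"
  shows "Nprod (periodic_ext (m + 2) b) s (m + 2) = - mat 1"
proof (rule Nprod_neg_one_all_shifts)
  show "periodic_ext (m + 2) b (x + int (m + 2)) = periodic_ext (m + 2) b x" for x
    by (rule periodic_ext_add_period)
  show "Nprod (periodic_ext (m + 2) b) 0 (m + 2) = - mat 1"
    using assms by (simp add: Xm_iff_Nprod)
qed

lemma Xm_P_level:
  assumes "b \<in> Xm m"
  shows "P m (window (periodic_ext (m + 2) b) s) = 1"
  using Xm_Nprod[OF assms, of "s - 1", unfolded add_2_eq_Suc' Nprod_eq_continuants]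
  by (simp add: mat_1_eq_mat2 uminus_mat2 mat2_eq_iff)

section \<open>Solutions of the T-system from continuants\<close>

definition Tseq :: "(int \<Rightarrow> complex) \<Rightarrow> nat \<Rightarrow> int \<Rightarrow> complex" where
  "Tseq c i k = P i (window c ((k - int i) div 2))"

lemma Tb_eq_Tseq: "Tb m b = Tseq (periodic_ext (m + 2) b)"
  unfolding Tb_def Tseq_def window_def periodic_ext_def by (intro ext) (rule refl)

lemma Tseq_0 [simp]: "Tseq c 0 k = 1"
  by (simp add: Tseq_def)

lemma Tseq_1: "Tseq c 1 (2 * s + 1) = c s"
  by (simp add: Tseq_def window_def)

lemma Tseq_relation:
  assumes "1 \<le> i" and "odd (int i + k)"
  shows "Tseq c i (k - 1) * Tseq c i (k + 1) = Tseq c (i - 1) k * Tseq c (i + 1) k + 1"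
proof -
  obtain r where i: "i = r + 1" using assms(1) by (metis add.commute le_Suc_ex)
  define s where "s = (k - 1 - int i) div 2"
  have "even (k - 1 - int i)" using assms(2) by presburger
  then have "(k - 1 - int i) div 2 = s" "(k + 1 - int i) div 2 = s + 1"
    "(k - int r) div 2 = s + 1" "(k - int (r + 2)) div 2 = s"
    unfolding s_def i by presburger+
  then show ?thesis
    using continuant_identity[of r c s]
    by (simp add: Tseq_def i algebra_simps)
qed

lemma Tb_T_solution:
  assumes "b \<in> Xm m"
  shows "T_solution m (Tb m b)"
  unfolding T_solution_def Tb_eq_Tseq
proof (intro conjI allI impI)
  show "Tseq (periodic_ext (m + 2) b) m k = 1" for k
    by (simp only: Tseq_def Xm_P_level[OF assms])
  show "Tseq (periodic_ext (m + 2) b) i (k - 1) * Tseq (periodic_ext (m + 2) b) i (k + 1)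
      = Tseq (periodic_ext (m + 2) b) (i - 1) k * Tseq (periodic_ext (m + 2) b) (i + 1) k + 1"
    if "1 \<le> i \<and> i + 1 \<le> m \<and> odd (int i + k)" for i k
    using that by (intro Tseq_relation) auto
qed simp

lemma nonvanishing_solution_eq_Tseq:
  assumes sol: "T_solution m T" and nv: "T_nonvanishing m T"
  shows "i \<le> m \<Longrightarrow> even (int i + k) \<Longrightarrow> T i k = Tseq (\<lambda>s. T 1 (2 * s + 1)) i k"
proof (induction i arbitrary: k rule: less_induct)
  case (less i)
  let ?c = "\<lambda>s. T 1 (2 * s + 1)"
  have relation: "T i (k - 1) * T i (k + 1) = T (i - 1) k * T (i + 1) k + 1"
    if "1 \<le> i" "i + 1 \<le> m" "odd (int i + k)" for i k
    using sol that unfolding T_solution_def by blast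
  consider "i = 0" | "i = 1" | j where "i = j + 2"
    by (metis One_nat_def add_2_eq_Suc' not0_implies_Suc)
  then show ?case
  proof cases
    case 1
    then show ?thesis using sol less.prems by (simp add: T_solution_def)
  next
    case 2
    then have "k = 2 * ((k - 1) div 2) + 1" using less.prems by presburger
    then show ?thesis using 2 Tseq_1[of ?c "(k - 1) div 2"] by simp
  next
    case 3
    have parity: "odd (int (j + 1) + k)" "even (int (j + 1) + (k - 1))"
      "even (int (j + 1) + (k + 1))" "even (int j + k)"
      using less.prems 3 by presburger+
    have "T (j + 1) (k - 1) * T (j + 1) (k + 1) = T j k * T i k + 1"
      using relation[of "j + 1" k] less.prems parity 3 by simp
    moreover have "Tseq ?c (j + 1) (k - 1) * Tseq ?c (j + 1) (k + 1) = Tseq ?c j k * Tseq ?c i k + 1"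
      using Tseq_relation[of "j + 1" k ?c] parity 3 by (simp add: algebra_simps)
    moreover have "T (j + 1) (k - 1) = Tseq ?c (j + 1) (k - 1)" "T (j + 1) (k + 1) = Tseq ?c (j + 1) (k + 1)"
      "T j k = Tseq ?c j k"
      using less.IH[of "j + 1" "k - 1"] less.IH[of "j + 1" "k + 1"] less.IH[of j k]
        less.prems parity 3 by simp_all
    moreover have "T j k \<noteq> 0"
      using nv less.prems parity 3 unfolding T_nonvanishing_def by simp
    ultimately show ?thesis by simp
  qed
qed

lemma Nprod_neg_one_of_level:
  assumes "1 \<le> m" and level: "\<And>s. P m (window c s) = 1"
    and nonzero: "\<And>s. P (m - 1) (window c s) \<noteq> 0"
  shows "Nprod c s (m + 2) = - mat 1"
proof -
  obtain r where m: "m = r + 1" using assms(1) by (metis add.commute le_Suc_ex)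
  have next_level: "P (m + 1) (window c s) = 0" for s
    using continuant_identity[of r c s] level nonzero[of "s + 1"] by (simp add: m)
  have "P (m + 2) (window c s) = - 1"
    using continuant_identity[of m c s] level next_level by (simp add: add.assoc)
  then show ?thesis
    using level next_level
    by (simp only: add_2_eq_Suc' Nprod_eq_continuants) (simp add: mat_1_eq_mat2 uminus_mat2)
qed

lemma periodic_of_Nprod_neg_one:
  assumes "\<And>s. Nprod c s n = - mat 1"
  shows "c (x + int n) = c x"
proof -
  have "Nmat (c x) ** Nprod c (x + 1) n = Nprod c x (Suc n)"
    by (rule Nprod_Suc_left[symmetric])
  also have "\<dots> = Nprod c x n ** Nmat (c (x + int n))"
    by simp
  finally have "Nmat (c x) = Nmat (c (x + int n))"
    by (simp add: assms matrix_mul_uminus_left matrix_mul_uminus_right)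
  then show ?thesis by (simp add: Nmat_def mat2_eq_iff)
qed

lemma periodic_mod:
  assumes per: "\<And>x. c (x + int n) = c x"
  shows "c (x mod int n) = c x"
proof -
  have "c (y + int n * q) = c y" for y q
  proof (induction q rule: int_induct[where k = 0])
    case (step1 q)
    then show ?case using per[of "y + int n * q"] by (simp add: algebra_simps)
  next
    case (step2 q)
    then show ?case using per[of "y + int n * (q - 1)"] by (simp add: algebra_simps)
  qed simp
  from this[of "x mod int n" "x div int n"] show ?thesis by simp
qed

lemma nonvanishing_solution_eq_Tb:
  assumes "1 \<le> m" and sol: "T_solution m T" and nv: "T_nonvanishing m T"
  obtains b where "b \<in> Xm m" "\<And>i k. i \<le> m \<Longrightarrow> even (int i + k) \<Longrightarrow> T i k = Tb m b i k"
proof -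
  define c where "c = (\<lambda>s. T 1 (2 * s + 1))"
  have T_eq: "T i k = Tseq c i k" if "i \<le> m" "even (int i + k)" for i k
    using nonvanishing_solution_eq_Tseq[OF sol nv that] by (simp add: c_def)
  have "P m (window c s) = 1" for s
    using T_eq[of m "2 * s + int m"] sol by (simp add: Tseq_def T_solution_def)
  moreover have "P (m - 1) (window c s) \<noteq> 0" for s
    using T_eq[of "m - 1" "2 * s + int m - 1"] nv[unfolded T_nonvanishing_def, rule_format, of "m - 1" "2 * s + int m - 1"]
      assms(1) by (simp add: Tseq_def of_nat_diff)
  ultimately have monodromy: "Nprod c s (m + 2) = - mat 1" for s
    by (rule Nprod_neg_one_of_level[OF assms(1)])
  define b where "b j = (if j < m + 2 then c (int j) else 0)" for j
  have "periodic_ext (m + 2) b = c"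
  proof
    fix x
    have "periodic_ext (m + 2) b x = c (x mod int (m + 2))"
      by (simp add: periodic_ext_def b_def nat_less_iff)
    also have "\<dots> = c x"
      by (intro periodic_mod periodic_of_Nprod_neg_one monodromy)
    finally show "periodic_ext (m + 2) b x = c x" .
  qed
  then have "b \<in> Xm m" and "Tb m b = Tseq c"
    by (simp_all only: Xm_iff_Nprod Tb_eq_Tseq monodromy) (simp add: b_def)
  then show ?thesis using that T_eq by simp
qed

lemma Xm_eq_if_Tb_eq:
  assumes "b \<in> Xm m" "b' \<in> Xm m"
    and Tb_eq: "\<And>k. odd k \<Longrightarrow> Tb m b 1 k = Tb m b' 1 k"
  shows "b = b'"
proof
  fix j
  show "b j = b' j"
  proof (cases "j < m + 2")
    case True
    have "Tb m b 1 (2 * int j + 1) = b j" for b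
      by (simp only: Tb_eq_Tseq Tseq_1 periodic_ext_nth[OF True])
    then show ?thesis using Tb_eq[of "2 * int j + 1"] by simp
  next
    case False
    then show ?thesis using assms(1,2) by (simp add: Xm_def)
  qed
qed

section \<open>Genericity of nonvanishing solutions\<close>

definition Xm_nonvanishing :: "nat \<Rightarrow> (nat \<Rightarrow> complex) set" where
  "Xm_nonvanishing m = {c \<in> Xm m. T_nonvanishing m (Tb m c)}"

definition Tprod :: "nat \<Rightarrow> (nat \<Rightarrow> complex) \<Rightarrow> complex" where
  "Tprod m b = (\<Prod>i\<le>m. \<Prod>s<m + 2. Tb m b i (2 * int s + int i))"

lemma window_periodic_ext_mod:
  "window (periodic_ext n b) (s mod int n) = window (periodic_ext n b) s"
proof
  fix j
  have "(s mod int n + int j - 1) mod int n = (s + int j - 1) mod int n"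
    by (metis add_diff_eq mod_add_left_eq)
  then show "window (periodic_ext n b) (s mod int n) j = window (periodic_ext n b) s j"
    by (simp add: window_def periodic_ext_def)
qed

lemma T_nonvanishing_if_Tprod:
  assumes "Tprod m b \<noteq> 0"
  shows "T_nonvanishing m (Tb m b)"
  unfolding T_nonvanishing_def
proof (intro allI impI)
  fix i k
  assume ik: "i \<le> m \<and> even (int i + k)"
  define s where "s = nat (((k - int i) div 2) mod int (m + 2))"
  have s: "s < m + 2" "int s = ((k - int i) div 2) mod int (m + 2)"
    unfolding s_def by (simp_all add: nat_less_iff)
  have "Tb m b i (2 * int s + int i) \<noteq> 0"
    using assms ik s(1) unfolding Tprod_def
    by (metis (no_types, lifting) atMost_iff finite_atMost finite_lessThan lessThan_iff prod_zero_iff)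
  moreover have "Tb m b i (2 * int s + int i) = Tb m b i k"
    unfolding Tb_eq_Tseq Tseq_def
    by (simp only: add_diff_cancel_right' nonzero_mult_div_cancel_left zero_neq_numeral
        s(2) window_periodic_ext_mod)
  ultimately show "Tb m b i k \<noteq> 0" by simp
qed

lemma P_const_cos:
  assumes "sin \<theta> \<noteq> 0"
  shows "P r (\<lambda>_. complex_of_real (2 * cos \<theta>)) = complex_of_real (sin (real (r + 1) * \<theta>) / sin \<theta>)"
proof (induction r rule: induct_nat_012)
  case 1
  have "sin (real (Suc 0 + 1) * \<theta>) / sin \<theta> = 2 * cos \<theta>"
    using assms by (simp add: sin_double)
  then show ?case by simp
next
  case (ge2 r)
  have "sin (real (r + 3) * \<theta>) = 2 * cos \<theta> * sin (real (r + 2) * \<theta>) - sin (real (r + 1) * \<theta>)"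
    using sin_add[of "real (r + 2) * \<theta>" \<theta>] sin_diff[of "real (r + 2) * \<theta>" \<theta>]
    by (simp add: algebra_simps)
  then have "sin (real (r + 3) * \<theta>) / sin \<theta>
      = sin (real (r + 2) * \<theta>) / sin \<theta> * (2 * cos \<theta>) - sin (real (r + 1) * \<theta>) / sin \<theta>"
    by (simp add: diff_divide_distrib)
  then show ?case
    using ge2 by (simp add: numeral_3_eq_3 numeral_2_eq_2 add.commute)
qed (use assms in simp)

lemma sin_cos_point_angle_pos:
  assumes "i \<le> m"
  shows "sin (real (i + 1) * (pi / real (m + 2))) > 0"
proof (rule sin_gt_zero)
  have "real (i + 1) / real (m + 2) < 1" using assms by simp
  then have "real (i + 1) / real (m + 2) * pi < 1 * pi" by (intro mult_strict_right_mono) auto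
  then show "real (i + 1) * (pi / real (m + 2)) < pi" by simp
qed simp

definition cos_point :: "nat \<Rightarrow> nat \<Rightarrow> complex" where
  "cos_point m j = (if j < m + 2 then complex_of_real (2 * cos (pi / real (m + 2))) else 0)"

lemma periodic_ext_cos_point:
  "periodic_ext (m + 2) (cos_point m) = (\<lambda>_. complex_of_real (2 * cos (pi / real (m + 2))))"
  by (simp add: fun_eq_iff periodic_ext_def cos_point_def nat_less_iff)

lemma P_cos_point:
  "P r (window (periodic_ext (m + 2) (cos_point m)) s)
     = complex_of_real (sin (real (r + 1) * (pi / real (m + 2))) / sin (pi / real (m + 2)))"
  unfolding periodic_ext_cos_point window_def
  using P_const_cos[of "pi / real (m + 2)" r] sin_cos_point_angle_pos[of 0 m] by simp

lemma cos_point_in_Xm: "cos_point m \<in> Xm m"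
  unfolding Xm_iff_Nprod
proof
  show "\<forall>j\<ge>m + 2. cos_point m j = 0" by (simp add: cos_point_def)
  define \<theta> where "\<theta> = pi / real (m + 2)"
  have "sin \<theta> > 0"
    using sin_cos_point_angle_pos[of 0 m] by (simp add: \<theta>_def)
  moreover have "real (m + 2 + 1) * \<theta> = pi + \<theta>" "real (m + 1 + 1) * \<theta> = pi"
    "real (m + 1) * \<theta> = pi - \<theta>"
    unfolding \<theta>_def by (simp_all add: field_simps)
  ultimately show "Nprod (periodic_ext (m + 2) (cos_point m)) 0 (m + 2) = - mat 1"
    unfolding Nprod_eq_continuants[folded add_2_eq_Suc'] P_cos_point \<theta>_def[symmetric]
    by (simp add: mat_1_eq_mat2 uminus_mat2 mat2_eq_iff sin_add)
qed

lemma cos_point_nonzero: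
  assumes "1 \<le> m" "j < m + 2"
  shows "cos_point m j \<noteq> 0"
proof -
  have "cos (pi / real (m + 2)) > 0"
  proof (rule cos_gt_zero_pi)
    have "0 < pi / real (m + 2)" by simp
    then show "- (pi / 2) < pi / real (m + 2)" using pi_gt_zero by linarith
    show "pi / real (m + 2) < pi / 2"
      using assms(1) by (intro divide_strict_left_mono) simp_all
  qed
  then show ?thesis using assms(2) by (simp add: cos_point_def)
qed

lemma Tprod_cos_point: "Tprod m (cos_point m) \<noteq> 0"
proof -
  have "P i (window (periodic_ext (m + 2) (cos_point m)) s) \<noteq> 0" if "i \<le> m" for i s
    unfolding P_cos_point using sin_cos_point_angle_pos[OF that] sin_cos_point_angle_pos[of 0 m] by simp
  then show ?thesis by (simp add: Tprod_def Tb_eq_Tseq Tseq_def)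
qed

definition head_prod :: "nat \<Rightarrow> (nat \<Rightarrow> complex) \<Rightarrow> complex^2^2" where
  "head_prod m a = Nprod (\<lambda>x. a (nat x)) 0 (m - 1)"

lemma Nprod_3:
  "Nprod c s 3 = mat2 (c s * c (s + 1) * c (s + 2) - c s - c (s + 2)) (c s * c (s + 1) - 1)
     (1 - c (s + 1) * c (s + 2)) (- c (s + 1))"
  by (simp add: numeral_3_eq_3 Nmat_def mat_1_eq_mat2 mat2_mult mat2_eq_iff algebra_simps)

lemma Xm_iff_head_prod:
  assumes "1 \<le> m" and A: "A = head_prod m b"
  shows "b \<in> Xm m \<longleftrightarrow> (\<forall>j\<ge>m + 2. b j = 0) \<and>
    b (m - 1) * b m * b (m + 1) - b (m - 1) - b (m + 1) = - A$2$2 \<and>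
    b (m - 1) * b m - 1 = A$1$2 \<and> 1 - b m * b (m + 1) = A$2$1 \<and> b m = A$1$1"
proof -
  let ?c = "periodic_ext (m + 2) b"
  have "?c (int (m - 1)) = b (m - 1)" "?c (int (m - 1) + 1) = b m" "?c (int (m - 1) + 2) = b (m + 1)"
    using periodic_ext_nth[of "m - 1" "m + 2" b] periodic_ext_nth[of m "m + 2" b]
      periodic_ext_nth[of "m + 1" "m + 2" b] assms(1)
    by (simp_all add: of_nat_diff add.commute)
  then have tail: "Nprod ?c (int (m - 1)) 3 = mat2 (b (m - 1) * b m * b (m + 1) - b (m - 1) - b (m + 1))
      (b (m - 1) * b m - 1) (1 - b m * b (m + 1)) (- b m)"
    by (simp only: Nprod_3)
  have "Nprod ?c 0 (m + 2) = Nprod ?c 0 (m - 1) ** Nprod ?c (int (m - 1)) 3"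
    using Nprod_add[of ?c 0 "m - 1" 3] assms(1) by simp
  also have "Nprod ?c 0 (m - 1) = A"
    unfolding A head_prod_def by (rule Nprod_cong) (simp add: periodic_ext_nth)
  finally have split: "Nprod ?c 0 (m + 2) = A ** Nprod ?c (int (m - 1)) 3" .
  obtain a11 a12 a21 a22 where A_eq: "A = mat2 a11 a12 a21 a22" by (rule mat2_cases)
  have "det A = 1" unfolding A head_prod_def by (rule det_Nprod)
  then have "a11 * a22 - a12 * a21 = 1" by (simp add: A_eq det_mat2)
  from mult_eq_neg_one_iff_adjugate[OF this] show ?thesis
    unfolding Xm_iff_Nprod split tail A_eq by (auto simp: mat2_eq_iff)
qed

lemma head_prod_Xm:
  assumes "1 \<le> m" "b \<in> Xm m"
  shows "head_prod m b $1$1 = b m"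
  using Xm_iff_head_prod[OF assms(1) refl] assms(2) by simp

text \<open>On the chart \<open>head_prod m a $1$1 \<noteq> 0\<close> the coordinates \<open>b\<^sub>0, \<dots>, b\<^sub>m\<^sub>-\<^sub>2\<close> are free,
  and \<open>Xm_iff_head_prod\<close> solves for \<open>b\<^sub>m\<^sub>-\<^sub>1, b\<^sub>m, b\<^sub>m\<^sub>+\<^sub>1\<close>.\<close>

definition chart_point :: "nat \<Rightarrow> (nat \<Rightarrow> complex) \<Rightarrow> nat \<Rightarrow> complex" where
  "chart_point m a j =
    (let A = head_prod m a in
     if j < m - 1 then a j
     else if j = m - 1 then (A$1$2 + 1) / A$1$1
     else if j = m then A$1$1
     else if j = m + 1 then (1 - A$2$1) / A$1$1
     else 0)"

lemma head_prod_chart_point: "head_prod m (chart_point m a) = head_prod m a"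
  unfolding head_prod_def by (rule Nprod_cong) (simp add: chart_point_def)

lemma chart_point_in_Xm:
  assumes "1 \<le> m" and nz: "head_prod m a $1$1 \<noteq> 0"
  shows "chart_point m a \<in> Xm m"
proof -
  let ?A = "head_prod m a"
  have "?A$1$1 * ?A$2$2 - ?A$1$2 * ?A$2$1 = 1"
    using det_Nprod[of "\<lambda>x. a (nat x)" 0 "m - 1"] by (simp add: head_prod_def det_2)
  then show ?thesis
    using assms
    by (subst Xm_iff_head_prod[OF assms(1) head_prod_chart_point[symmetric]])
      (auto simp: chart_point_def Let_def field_simps)
qed

lemma chart_point_eq:
  assumes "1 \<le> m" "b \<in> Xm m" "b m \<noteq> 0"
  shows "chart_point m b = b"
proof
  fix j
  have "b (m - 1) * b m - 1 = head_prod m b $1$2" "1 - b m * b (m + 1) = head_prod m b $2$1"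
    "b m = head_prod m b $1$1" "\<forall>j\<ge>m + 2. b j = 0"
    using assms(2) Xm_iff_head_prod[OF assms(1) refl] by blast+
  then show "chart_point m b j = b j"
    using assms by (auto simp: chart_point_def Let_def field_simps)
qed

lemma P_holomorphic:
  assumes "\<And>j. (\<lambda>t. a t j) holomorphic_on S"
  shows "(\<lambda>t. P r (a t)) holomorphic_on S"
  by (induction r rule: induct_nat_012) (auto intro!: holomorphic_intros assms)

lemma Nprod_holomorphic:
  assumes "\<And>x. (\<lambda>t. c t x) holomorphic_on S"
  shows "(\<lambda>t. Nprod (c t) s r $ i $ j) holomorphic_on S"
proof (induction r arbitrary: i j)
  case 0
  show ?case by (simp add: mat_def)
next
  case (Suc r)
  have "(\<lambda>t. Nmat (c t x) $ k $ l) holomorphic_on S" for x k l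
    using exhaust_2[of k] exhaust_2[of l] assms by (auto simp: Nmat_def)
  then show ?case
    unfolding Nprod.simps matrix_matrix_mult_def vec_lambda_beta
    by (intro holomorphic_intros Suc)
qed

lemma chart_point_holomorphic:
  assumes "\<And>j. (\<lambda>t. a t j) holomorphic_on S" and "\<And>t. t \<in> S \<Longrightarrow> head_prod m (a t) $1$1 \<noteq> 0"
  shows "(\<lambda>t. chart_point m (a t) j) holomorphic_on S"
proof -
  have "(\<lambda>t. head_prod m (a t) $ k $ l) holomorphic_on S" for k l
    unfolding head_prod_def by (intro Nprod_holomorphic assms)
  then show ?thesis
    unfolding chart_point_def Let_def
    by (cases "j < m - 1"; cases "j = m - 1"; cases "j = m"; cases "j = m + 1")
      (auto intro!: holomorphic_intros assms(1) simp: assms(2))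
qed

lemma Tprod_holomorphic:
  assumes "\<And>j. (\<lambda>t. b t j) holomorphic_on S"
  shows "(\<lambda>t. Tprod m (b t)) holomorphic_on S"
  unfolding Tprod_def Tb_def by (intro holomorphic_intros P_holomorphic assms)

lemma closure_if_holomorphic_nonzero:
  fixes \<gamma> :: "complex \<Rightarrow> 'a::topological_space"
  assumes "G holomorphic_on U" "open U" "connected U" "z \<in> U" "w \<in> U" "G w \<noteq> 0"
    and "continuous_on U \<gamma>" and "\<And>t. t \<in> U \<Longrightarrow> G t \<noteq> 0 \<Longrightarrow> \<gamma> t \<in> S"
  shows "\<gamma> z \<in> closure S"
proof (rule Lim_in_closed_set[OF closed_closure _ at_neq_bot])
  show "(\<gamma> \<longlongrightarrow> \<gamma> z) (at z)"
    using assms(2,4,7) continuous_on_eq_continuous_at isContD by blast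
  show "\<forall>\<^sub>F t in at z. \<gamma> t \<in> closure S"
    using non_zero_neighbour_alt[OF assms(1-6)]
    by (rule eventually_mono) (use assms(8) closure_subset in blast)
qed

lemma connected_nonzero_set:
  assumes "Y holomorphic_on UNIV" "Y z \<noteq> 0"
  shows "connected {t. Y t \<noteq> 0}"
proof -
  have "\<not> Y constant_on UNIV \<Longrightarrow> countable {t. Y t = 0}"
    using holomorphic_countable_zeros[OF assms(1) open_UNIV connected_UNIV] by simp
  moreover have "Y constant_on UNIV \<Longrightarrow> {t. Y t = 0} = {}"
    using assms(2) unfolding constant_on_def by auto
  ultimately have "countable {t. Y t = 0}" by fastforce
  then have "path_connected (- {t. Y t = 0})"
    by (intro path_connected_complement_countable) simp_all
  then show ?thesis
    unfolding Collect_neg_eq by (rule path_connected_imp_connected)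
qed

lemma Xm_closure_if_nonzero_at_m:
  assumes "1 \<le> m" "b \<in> Xm m" "b m \<noteq> 0"
  shows "b \<in> closure (Xm_nonvanishing m)"
proof -
  define a where "a t j = b j + t * (cos_point m j - b j)" for t j
  define Y where "Y t = head_prod m (a t) $1$1" for t
  define U where "U = {t. Y t \<noteq> 0}"
  define \<gamma> where "\<gamma> t = chart_point m (a t)" for t
  define G where "G t = Tprod m (\<gamma> t)" for t
  have a_hol: "(\<lambda>t. a t j) holomorphic_on S" for j S
    unfolding a_def by (intro holomorphic_intros)
  have Y_hol: "Y holomorphic_on UNIV"
    unfolding Y_def head_prod_def by (intro Nprod_holomorphic a_hol)
  have a01: "a 0 = b" "a 1 = cos_point m"
    by (simp_all add: a_def fun_eq_iff)
  have cos_nz: "cos_point m m \<noteq> 0"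
    using cos_point_nonzero[OF assms(1)] by simp
  have U01: "0 \<in> U" "1 \<in> U"
    using head_prod_Xm[OF assms(1)] assms(2,3) cos_point_in_Xm cos_nz
    by (simp_all add: U_def Y_def a01)
  have "open U"
    unfolding U_def
    by (rule open_Collect_neq) (auto intro: holomorphic_on_imp_continuous_on[OF Y_hol])
  moreover have "connected U"
    unfolding U_def using connected_nonzero_set[OF Y_hol] U01 by (auto simp: U_def)
  moreover have \<gamma>_hol: "(\<lambda>t. \<gamma> t j) holomorphic_on U" for j
    unfolding \<gamma>_def by (intro chart_point_holomorphic a_hol) (simp add: U_def Y_def)
  then have "G holomorphic_on U"
    unfolding G_def by (intro Tprod_holomorphic)
  moreover have "continuous_on U \<gamma>"
    by (intro continuous_on_coordinatewise_then_product holomorphic_on_imp_continuous_on \<gamma>_hol)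
  moreover have \<gamma>01: "\<gamma> 0 = b" "\<gamma> 1 = cos_point m"
    using chart_point_eq assms cos_point_in_Xm cos_nz by (simp_all add: \<gamma>_def a01)
  then have "G 1 \<noteq> 0"
    by (simp add: G_def Tprod_cos_point)
  moreover have "\<gamma> t \<in> Xm_nonvanishing m" if "t \<in> U" "G t \<noteq> 0" for t
    using that chart_point_in_Xm[OF assms(1)] T_nonvanishing_if_Tprod
    by (simp add: Xm_nonvanishing_def \<gamma>_def G_def U_def Y_def)
  ultimately show ?thesis
    using closure_if_holomorphic_nonzero[of G U 0 1 \<gamma>] U01 \<gamma>01 by simp
qed

definition cyclic_shift :: "nat \<Rightarrow> nat \<Rightarrow> (nat \<Rightarrow> complex) \<Rightarrow> nat \<Rightarrow> complex" where
  "cyclic_shift m q b j = (if j < m + 2 then b ((j + q) mod (m + 2)) else 0)"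

lemma periodic_ext_cyclic_shift:
  "periodic_ext (m + 2) (cyclic_shift m q b) x = periodic_ext (m + 2) b (x + int q)"
proof -
  have "int ((nat (x mod int (m + 2)) + q) mod (m + 2)) = (x + int q) mod int (m + 2)"
    by (simp add: zmod_int mod_add_left_eq)
  then have "(nat (x mod int (m + 2)) + q) mod (m + 2) = nat ((x + int q) mod int (m + 2))"
    by linarith
  then show ?thesis
    by (simp add: periodic_ext_def cyclic_shift_def nat_less_iff)
qed

lemma cyclic_shift_cyclic_shift: "cyclic_shift m p (cyclic_shift m q b) = cyclic_shift m (q + p) b"
  by (simp add: fun_eq_iff cyclic_shift_def mod_add_left_eq add.assoc add.commute[of p])

lemma cyclic_shift_multiple_period:
  assumes "\<forall>j\<ge>m + 2. b j = 0"
  shows "cyclic_shift m ((m + 2) * k) b = b"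
proof
  fix j
  have "j < m + 2 \<Longrightarrow> (j + (m + 2) * k) mod (m + 2) = j"
    by (metis mod_mult_self2 mod_less)
  then show "cyclic_shift m ((m + 2) * k) b j = b j"
    using assms by (simp add: cyclic_shift_def)
qed

lemma cyclic_shift_in_Xm:
  assumes "b \<in> Xm m"
  shows "cyclic_shift m q b \<in> Xm m"
  using Xm_Nprod[OF assms, of "int q"] Nprod_shift[of "periodic_ext (m + 2) b" "int q" 0 "m + 2"]
  unfolding Xm_iff_Nprod periodic_ext_cyclic_shift by (simp add: cyclic_shift_def)

lemma window_periodic_ext_cyclic_shift:
  "window (periodic_ext (m + 2) (cyclic_shift m q b)) s = window (periodic_ext (m + 2) b) (s + int q)"
  unfolding window_def periodic_ext_cyclic_shift by (simp add: algebra_simps)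

lemma Tb_cyclic_shift: "Tb m (cyclic_shift m q b) i k = Tb m b i (k + 2 * int q)"
proof -
  have shift: "(k + 2 * int q - int i) div 2 = (k - int i) div 2 + int q" by presburger
  show ?thesis
    by (simp only: Tb_eq_Tseq Tseq_def window_periodic_ext_cyclic_shift shift)
qed

lemma cyclic_shift_in_Xm_nonvanishing:
  assumes "b \<in> Xm_nonvanishing m"
  shows "cyclic_shift m q b \<in> Xm_nonvanishing m"
  using assms cyclic_shift_in_Xm
  by (auto simp: Xm_nonvanishing_def T_nonvanishing_def Tb_cyclic_shift)

lemma cyclic_shift_in_closure_Xm_nonvanishing:
  assumes "b \<in> closure (Xm_nonvanishing m)"
  shows "cyclic_shift m q b \<in> closure (Xm_nonvanishing m)"
proof -
  have "continuous_on UNIV (\<lambda>b. cyclic_shift m q b j)" for j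
    by (cases "j < m + 2") (simp_all add: cyclic_shift_def)
  then have "continuous_on UNIV (cyclic_shift m q)"
    by (rule continuous_on_coordinatewise_then_product)
  then have "cyclic_shift m q ` closure (Xm_nonvanishing m) \<subseteq> closure (Xm_nonvanishing m)"
    using cyclic_shift_in_Xm_nonvanishing closure_subset[of "Xm_nonvanishing m"]
    by (intro image_closure_subset) (auto intro: continuous_on_subset)
  then show ?thesis using assms by blast
qed

lemma Xm_closure_if_nonzero:
  assumes "1 \<le> m" "b \<in> Xm m" "j < m + 2" "b j \<noteq> 0"
  shows "b \<in> closure (Xm_nonvanishing m)"
proof -
  have supp: "\<forall>j\<ge>m + 2. b j = 0" using assms(2) by (simp add: Xm_def)
  have "(m + (j + 2)) mod (m + 2) = j"
    using assms(3) mod_add_self2[of j "m + 2"] by (simp add: add.commute add.left_commute)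
  then have "cyclic_shift m (j + 2) b m \<noteq> 0" using assms(4) by (simp add: cyclic_shift_def add.commute)
  then have "cyclic_shift m (j + 2) b \<in> closure (Xm_nonvanishing m)"
    using Xm_closure_if_nonzero_at_m assms(1,2) cyclic_shift_in_Xm by blast
  then have "cyclic_shift m ((m + 1) * (j + 2)) (cyclic_shift m (j + 2) b) \<in> closure (Xm_nonvanishing m)"
    by (rule cyclic_shift_in_closure_Xm_nonvanishing)
  also have "cyclic_shift m ((m + 1) * (j + 2)) (cyclic_shift m (j + 2) b) = b"
    using cyclic_shift_multiple_period[OF supp, of "j + 2"] by (simp add: cyclic_shift_cyclic_shift algebra_simps)
  finally show ?thesis .
qed

text \<open>Since \<open>N(0) N(t) N(0) N(-t) = 1\<close>, this deforms the zero point within \<open>X\<^sub>m\<close> when \<open>m \<ge> 2\<close>.\<close>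

definition zero_perturbation :: "complex \<Rightarrow> nat \<Rightarrow> complex" where
  "zero_perturbation t j = (if j = 1 then t else if j = 3 then - t else 0)"

lemma Nprod_zero_perturbation:
  assumes "2 \<le> m"
  shows "Nprod (periodic_ext (m + 2) (zero_perturbation t)) 0 (m + 2)
       = Nprod (periodic_ext (m + 2) (zero_perturbation 0)) 0 (m + 2)"
proof -
  have "Nprod (periodic_ext (m + 2) (zero_perturbation t)) 0 (m + 2)
      = Nprod (periodic_ext (m + 2) (zero_perturbation t)) 4 (m - 2)" for t
  proof -
    let ?c = "periodic_ext (m + 2) (zero_perturbation t)"
    have "?c 0 = 0" "?c 1 = t" "?c 2 = 0" "?c 3 = - t"
      using assms by (simp_all add: periodic_ext_def zero_perturbation_def)
    then have "Nprod ?c 0 4 = mat 1"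
      by (simp add: numeral_eq_Suc Nmat_def mat_1_eq_mat2 mat2_mult)
    moreover have "m + 2 = 4 + (m - 2)" using assms by simp
    ultimately show ?thesis
      using Nprod_add[of ?c 0 4 "m - 2"] by simp
  qed
  moreover have "Nprod (periodic_ext (m + 2) (zero_perturbation t)) 4 (m - 2)
      = Nprod (periodic_ext (m + 2) (zero_perturbation 0)) 4 (m - 2)"
  proof (rule Nprod_cong)
    fix j assume "j < m - 2"
    then show "periodic_ext (m + 2) (zero_perturbation t) (4 + int j)
        = periodic_ext (m + 2) (zero_perturbation 0) (4 + int j)"
      using periodic_ext_nth[of "4 + j" "m + 2"] by (simp add: zero_perturbation_def)
  qed
  ultimately show ?thesis by simp
qed

lemma Xm_closure_zero:
  assumes "1 \<le> m" and zero: "(\<lambda>_. 0) \<in> Xm m"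
  shows "(\<lambda>_. 0) \<in> closure (Xm_nonvanishing m)"
proof -
  have zp0: "zero_perturbation 0 = (\<lambda>_. 0)"
    by (simp add: fun_eq_iff zero_perturbation_def)
  have "m \<noteq> 1"
    using Xm_P_level[OF zero, of 0] by (auto simp: window_def periodic_ext_def)
  then have "2 \<le> m" using assms(1) by simp
  then have zp_Xm: "zero_perturbation t \<in> Xm m" for t
    using zero Nprod_zero_perturbation[of m t] unfolding Xm_iff_Nprod zp0[symmetric]
    by (simp add: zero_perturbation_def)
  have "continuous_on UNIV (\<lambda>t. zero_perturbation t j)" for j
    by (cases "j = 1"; cases "j = 3") (simp_all add: zero_perturbation_def continuous_intros)
  then have "continuous_on UNIV zero_perturbation"
    by (rule continuous_on_coordinatewise_then_product)
  moreover have "zero_perturbation t \<in> closure (Xm_nonvanishing m)" if "t \<noteq> 0" for t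
    using Xm_closure_if_nonzero[OF assms(1) zp_Xm, of 1] that by (simp add: zero_perturbation_def)
  ultimately have "zero_perturbation 0 \<in> closure (closure (Xm_nonvanishing m))"
    by (intro closure_if_holomorphic_nonzero[of "\<lambda>t. t" UNIV 0 1 _ "closure (Xm_nonvanishing m)"])
      auto
  then show ?thesis by (simp add: zp0)
qed

lemma Xm_subset_closure_Xm_nonvanishing:
  assumes "1 \<le> m"
  shows "Xm m \<subseteq> closure (Xm_nonvanishing m)"
proof
  fix b assume b: "b \<in> Xm m"
  show "b \<in> closure (Xm_nonvanishing m)"
  proof (cases "\<exists>j<m + 2. b j \<noteq> 0")
    case True
    then show ?thesis using Xm_closure_if_nonzero[OF assms b] by blast
  next
    case False
    then have "b = (\<lambda>_. 0)"
      using b by (auto simp: fun_eq_iff Xm_def not_less)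
    then show ?thesis using Xm_closure_zero[OF assms] b by simp
  qed
qed

theorem proposition4p32:
  fixes m :: nat
  assumes "m \<ge> 1"
  shows "(\<forall>b \<in> Xm m. T_solution m (Tb m b))
       \<and> (\<forall>b \<in> Xm m. b \<in> closure {c \<in> Xm m. T_nonvanishing m (Tb m c)})
       \<and> (\<forall>T. T_solution m T \<and> T_nonvanishing m T \<longrightarrow>
            (\<exists>!b. b \<in> Xm m \<and> (\<forall>i k. i \<le> m \<and> even (int i + k) \<longrightarrow> T i k = Tb m b i k)))"
proof (intro conjI ballI allI impI)
  show "T_solution m (Tb m b)" if "b \<in> Xm m" for b
    using that by (rule Tb_T_solution)
  show "b \<in> closure {c \<in> Xm m. T_nonvanishing m (Tb m c)}" if "b \<in> Xm m" for b
    using that Xm_subset_closure_Xm_nonvanishing[OF assms] by (auto simp: Xm_nonvanishing_def)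
next
  fix T assume T: "T_solution m T \<and> T_nonvanishing m T"
  let ?represents = "\<lambda>b. \<forall>i k. i \<le> m \<and> even (int i + k) \<longrightarrow> T i k = Tb m b i k"
  obtain b where "b \<in> Xm m" "?represents b"
    using nonvanishing_solution_eq_Tb[OF assms] T by metis
  moreover have "b' = b" if "b' \<in> Xm m" "?represents b'" for b'
    using Xm_eq_if_Tb_eq[OF that(1) \<open>b \<in> Xm m\<close>] that(2) \<open>?represents b\<close> assms by auto
  ultimately show "\<exists>!b. b \<in> Xm m \<and> ?represents b" by blast
qed

end
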